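(* Let $\mu$ be a Borel probability measure on $\mathbb{R}^d$ and $p\ge1$. \textbf{A.} If $\phi\in W^{1,p}_\mu$ and $\psi\in C^1_b(\mathbb{R}^d)$, then $\psi\phi\in W^{1,p}_\mu$ and $\partial_i^\mu(\psi\phi)=\psi\,\partial_i^\mu\phi+\partial_i\psi\,\phi$, $i=1,\dots,d$. In particular, if $1\in W^{1,p}_\mu$, then every $\psi\in C^1_b(\mathbb{R}^d)$ belongs to $W^{1,p}_\mu$ and $\partial_i^\mu\psi=\psi\,\partial_i^\mu1+\partial_i\psi$. \textbf{B.} Suppose $1\in W^{1,p}_\mu$. If $\psi\in C^1_b(\mathbb{R}^m)$ and $u=(u_1,\dots,u_m):\mathbb{R}^d\to\mathbb{R}^m$ with $u_j\in C^1_b(\mathbb{R}^d)$, $j=1,\dots,m$, then $\psi\circ u\in W^{1,p}_\mu$ and $$\partial_i^\mu(\psi\circ u)=\sum_{j=1}^m(\partial_j\psi)\circ u\;\partial_i^\mu u_j+T_\psi\circ u\;\partial_i^\mu1,\qquad T_\psi(x)=\psi(x)-\sum_{j=1}^m\partial_j\psi(x)\,x_j\ (x\in\mathbb{R}^m).$$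
   Context: $L^p_\mu=\{\phi:\int|\phi|^pd\mu<\infty\}$. $W^{1,p}_\mu$ is the space of $\phi\in L^p_\mu$ such that for each $i=1,\dots,d$ there is $\theta_i\in L^p_\mu$ with $\int\partial_if\,\phi\,d\mu=-\int f\theta_i\,d\mu$ for all $f\in C_c^\infty(\mathbb{R}^d)$; one writes $\partial_i^\mu\phi:=\theta_i$. $C^1_b$ denotes $C^1$ functions which are bounded with bounded first derivatives. *)

theory Defs
  imports "HOL-Probability.Probability"
begin

definition partial :: "(real^'n \<Rightarrow> real) \<Rightarrow> 'n \<Rightarrow> real^'n \<Rightarrow> real" where
  "partial f i x = frechet_derivative f (at x) (axis i 1)"

fun iter_partial :: "(real^'n \<Rightarrow> real) \<Rightarrow> 'n list \<Rightarrow> real^'n \<Rightarrow> real" where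
  "iter_partial f [] = f"
| "iter_partial f (i # is) = partial (iter_partial f is) i"

definition smooth :: "(real^'n \<Rightarrow> real) \<Rightarrow> bool" where
  "smooth f \<longleftrightarrow> (\<forall>is x. iter_partial f is differentiable (at x))"

definition Cc_inf :: "(real^'n \<Rightarrow> real) set" where
  "Cc_inf = {f. smooth f \<and> compact (closure {x. f x \<noteq> 0})}"

definition C1b :: "(real^'n \<Rightarrow> real) set" where
  "C1b = {f. (\<forall>x. f differentiable (at x)) \<and> (\<forall>i. continuous_on UNIV (partial f i))
             \<and> bounded (range f) \<and> (\<forall>i. bounded (range (partial f i)))}"

definition Lp :: "(real^'n) measure \<Rightarrow> real \<Rightarrow> (real^'n \<Rightarrow> real) set" where
  "Lp \<mu> p = {\<phi>. \<phi> \<in> borel_measurable \<mu> \<and> (\<integral>\<^sup>+ x. ennreal (\<bar>\<phi> x\<bar> powr p) \<partial>\<mu>) < \<infinity>}"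

definition weak_deriv :: "(real^'n) measure \<Rightarrow> real \<Rightarrow> (real^'n \<Rightarrow> real) \<Rightarrow> 'n \<Rightarrow> (real^'n \<Rightarrow> real) \<Rightarrow> bool" where
  "weak_deriv \<mu> p \<phi> i \<theta> \<longleftrightarrow> \<theta> \<in> Lp \<mu> p \<and>
     (\<forall>f\<in>Cc_inf. (\<integral>x. partial f i x * \<phi> x \<partial>\<mu>) = - (\<integral>x. f x * \<theta> x \<partial>\<mu>))"

definition W1p :: "(real^'n) measure \<Rightarrow> real \<Rightarrow> (real^'n \<Rightarrow> real) set" where
  "W1p \<mu> p = {\<phi>. \<phi> \<in> Lp \<mu> p \<and> (\<forall>i. \<exists>\<theta>. weak_deriv \<mu> p \<phi> i \<theta>)}"

end

theory Submission
  imports Defs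
begin

text \<open>
  Weak derivatives are tested only against \<open>Cc_inf\<close>. For a test function \<open>f\<close> and a real
  polynomial \<open>R\<close>, \<open>f R\<close> is again a test function, so the defining identity of
  \<open>\<partial>\<^sub>i\<^sup>\<mu>\<phi>\<close> holds for \<open>f R\<close>. Approximating \<open>\<psi>\<close> together with \<open>\<partial>\<^sub>i\<psi>\<close> uniformly on the support of
  \<open>f\<close> by polynomials (Stone-Weierstrass for \<open>\<partial>\<^sub>i\<psi>\<close>, then integration along the \<open>i\<close>-th axis) and
  passing to the limit under the integrals gives the Leibniz rule A; \<open>\<phi> = 1\<close> gives its second half.

  For B, \<open>\<psi> \<circ> u\<close> is again in \<open>C\<^sup>1\<^sub>b\<close>, so A gives it the weak derivative
  \<open>(\<psi> \<circ> u) \<partial>\<^sub>i\<^sup>\<mu>1 + \<partial>\<^sub>i(\<psi> \<circ> u)\<close>. By the chain rule this differs from the claimed derivative by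
  \<open>\<Sum>\<^sub>j (\<partial>\<^sub>j\<psi> \<circ> u) h\<^sub>j\<close>, where \<open>h\<^sub>j = \<partial>\<^sub>i\<^sup>\<mu>u\<^sub>j - (u\<^sub>j \<partial>\<^sub>i\<^sup>\<mu>1 + \<partial>\<^sub>iu\<^sub>j)\<close> is the difference of two weak
  derivatives of \<open>u\<^sub>j\<close>, hence orthogonal to every test function, and by the same polynomial
  approximation also to every test function times a continuous function.
\<close>

section \<open>Partial derivatives\<close>

lemma partial_eqI_has_derivative:
  "(f has_derivative D) (at x) \<Longrightarrow> partial f i x = D (axis i 1)"
  unfolding partial_def by (metis frechet_derivative_at)

lemma has_real_derivative_partial:
  assumes "f differentiable (at x)"
  shows "((\<lambda>t. f (x + t *\<^sub>R axis i 1)) has_real_derivative partial f i x) (at 0)"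
proof -
  have d: "(f has_derivative frechet_derivative f (at x)) (at x)"
    using assms frechet_derivative_works by blast
  have line: "((\<lambda>t::real. x + t *\<^sub>R axis i 1) has_derivative (\<lambda>t. t *\<^sub>R axis i 1)) (at 0)"
    by (auto intro!: derivative_eq_intros)
  have "((\<lambda>t. f (x + t *\<^sub>R axis i 1)) has_derivative
          (\<lambda>t. frechet_derivative f (at x) (t *\<^sub>R axis i 1))) (at 0)"
    using has_derivative_compose[OF line, of f] d by simp
  moreover have "linear (frechet_derivative f (at x))"
    using d has_derivative_linear by blast
  ultimately show ?thesis
    unfolding partial_def has_field_derivative_def
    by (simp add: linear_scale mult.commute[of _ "frechet_derivative f (at x) (axis i 1)"])
qed

lemma partial_eqI:
  assumes "f differentiable (at x)"
    and "((\<lambda>t. f (x + t *\<^sub>R axis i 1)) has_real_derivative D) (at 0)"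
  shows "partial f i x = D"
  using DERIV_unique has_real_derivative_partial[OF assms(1)] assms(2) by blast

lemma partial_add:
  assumes "f differentiable (at x)" "g differentiable (at x)"
  shows "partial (\<lambda>x. f x + g x) i x = partial f i x + partial g i x"
  by (rule partial_eqI)
     (use assms has_real_derivative_partial in \<open>auto intro!: derivative_eq_intros\<close>)

lemma partial_diff:
  assumes "f differentiable (at x)" "g differentiable (at x)"
  shows "partial (\<lambda>x. f x - g x) i x = partial f i x - partial g i x"
  by (rule partial_eqI)
     (use assms has_real_derivative_partial in \<open>auto intro!: derivative_eq_intros\<close>)

lemma partial_mult:
  assumes "f differentiable (at x)" "g differentiable (at x)"
  shows "partial (\<lambda>x. f x * g x) i x = partial f i x * g x + f x * partial g i x"
  by (rule partial_eqI)
     (use assms has_real_derivative_partial[of f x i] has_real_derivative_partial[of g x i]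
       in \<open>auto intro!: derivative_eq_intros\<close>)

lemma partial_const [simp]: "partial (\<lambda>_. c) i x = 0"
  by (rule partial_eqI_has_derivative[where D = "\<lambda>_. 0", simplified]) simp

lemma partial_eq_0_on_open:
  assumes "open U" "x \<in> U" "\<And>y. y \<in> U \<Longrightarrow> g y = 0"
  shows "partial g i x = 0"
proof -
  have "(g has_derivative (\<lambda>_. 0)) (at x)"
    by (rule has_derivative_transform_within_open[of "\<lambda>_. 0" _ x UNIV U]) (use assms in auto)
  then show ?thesis by (simp add: partial_eqI_has_derivative)
qed

lemma differentiable_sum_list_mult:
  fixes A B :: "'p \<Rightarrow> real^'n \<Rightarrow> real"
  assumes "\<forall>p\<in>set L. \<forall>x. A p differentiable (at x) \<and> B p differentiable (at x)"
  shows "(\<lambda>x. \<Sum>p\<leftarrow>L. A p x * B p x) differentiable (at x)"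
  using assms by (induction L) (auto intro!: differentiable_add differentiable_mult)

lemma partial_sum_list_mult:
  fixes A B :: "'p \<Rightarrow> real^'n \<Rightarrow> real"
  assumes "\<forall>p\<in>set L. \<forall>x. A p differentiable (at x) \<and> B p differentiable (at x)"
  shows "partial (\<lambda>x. \<Sum>p\<leftarrow>L. A p x * B p x) i x
           = (\<Sum>p\<leftarrow>L. partial (A p) i x * B p x + A p x * partial (B p) i x)"
  using assms
proof (induction L)
  case (Cons q L)
  have "partial (\<lambda>x. \<Sum>p\<leftarrow>q # L. A p x * B p x) i x
      = partial (\<lambda>x. A q x * B q x) i x + partial (\<lambda>x. \<Sum>p\<leftarrow>L. A p x * B p x) i x"
    using Cons.prems
    by (simp add: partial_add differentiable_mult differentiable_sum_list_mult)
  then show ?case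
    using Cons by (simp add: partial_mult)
qed simp

lemma has_derivative_vec_lambda:
  fixes u :: "'m::finite \<Rightarrow> real^'n \<Rightarrow> real"
  assumes "\<And>j. (u j has_derivative D j) (at x)"
  shows "((\<lambda>x. \<chi> j. u j x) has_derivative (\<lambda>h. \<chi> j. D j h)) (at x)"
proof (rule has_derivative_componentwise_within[THEN iffD2], intro ballI)
  fix b :: "real^'m" assume "b \<in> Basis"
  then obtain k where b: "b = axis k 1" unfolding Basis_vec_def Basis_real_def by blast
  show "((\<lambda>x. (\<chi> j. u j x) \<bullet> b) has_derivative (\<lambda>h. (\<chi> j. D j h) \<bullet> b)) (at x)"
    using assms[of k] by (simp add: b inner_axis)
qed

lemma linear_eq_sum_axis:
  fixes L :: "real^'m \<Rightarrow> real"
  assumes "linear L"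
  shows "L v = (\<Sum>j\<in>UNIV. v $ j * L (axis j 1))"
proof -
  have "L v = L (\<Sum>j\<in>UNIV. v $ j *\<^sub>R axis j 1)"
    using basis_expansion[of v] by (simp add: scalar_mult_eq_scaleR)
  also have "\<dots> = (\<Sum>j\<in>UNIV. v $ j * L (axis j 1))"
    using assms by (simp add: linear_sum linear_scale)
  finally show ?thesis .
qed

lemma partial_comp_vec_lambda:
  fixes \<psi> :: "real^'m \<Rightarrow> real" and u :: "'m \<Rightarrow> real^'n \<Rightarrow> real"
  assumes "\<And>y. \<psi> differentiable (at y)" "\<And>j x. u j differentiable (at x)"
  shows "(\<lambda>x. \<psi> (\<chi> j. u j x)) differentiable (at x)"
    and "partial (\<lambda>x. \<psi> (\<chi> j. u j x)) i x = (\<Sum>j\<in>UNIV. partial \<psi> j (\<chi> k. u k x) * partial (u j) i x)"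
proof -
  let ?U = "\<lambda>x. \<chi> j. u j x"
  let ?D\<psi> = "frechet_derivative \<psi> (at (?U x))"
  have d\<psi>: "(\<psi> has_derivative ?D\<psi>) (at (?U x))"
    using assms(1) frechet_derivative_works by blast
  have "(?U has_derivative (\<lambda>h. \<chi> j. frechet_derivative (u j) (at x) h)) (at x)"
    by (rule has_derivative_vec_lambda) (use assms(2) frechet_derivative_works in blast)
  from has_derivative_compose[OF this d\<psi>]
  have comp: "((\<lambda>x. \<psi> (?U x)) has_derivative
      (\<lambda>h. ?D\<psi> (\<chi> j. frechet_derivative (u j) (at x) h))) (at x)" .
  then show "(\<lambda>x. \<psi> (?U x)) differentiable (at x)"
    unfolding differentiable_def by blast
  have "partial (\<lambda>x. \<psi> (?U x)) i x = ?D\<psi> (\<chi> j. partial (u j) i x)"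
    using partial_eqI_has_derivative[OF comp, of i] by (simp add: partial_def)
  also have "\<dots> = (\<Sum>j\<in>UNIV. partial (u j) i x * ?D\<psi> (axis j 1))"
    using linear_eq_sum_axis[OF has_derivative_linear[OF d\<psi>], of "\<chi> j. partial (u j) i x"]
    by (simp only: vec_lambda_beta)
  finally show "partial (\<lambda>x. \<psi> (?U x)) i x = (\<Sum>j\<in>UNIV. partial \<psi> j (?U x) * partial (u j) i x)"
    by (simp add: partial_def mult.commute)
qed

section \<open>Polynomials and smooth functions\<close>

lemma real_polynomial_function_partial:
  fixes f :: "real^'n \<Rightarrow> real"
  assumes "real_polynomial_function f"
  shows "real_polynomial_function (partial f i)"
  using assms
proof (induction f)
  case (linear f)
  then have "partial f i = (\<lambda>_. f (axis i 1))"
    by (auto intro!: partial_eqI_has_derivative bounded_linear_imp_has_derivative)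
  then show ?case by (simp add: real_polynomial_function.intros(2))
next
  case (add f g)
  then have "partial (\<lambda>x. f x + g x) i = (\<lambda>x. partial f i x + partial g i x)"
    by (auto simp: partial_add differentiable_at_real_polynomial_function)
  then show ?case using add.IH by (simp add: real_polynomial_function.intros(3))
next
  case (mult f g)
  then have "partial (\<lambda>x. f x * g x) i = (\<lambda>x. partial f i x * g x + f x * partial g i x)"
    by (auto simp: partial_mult differentiable_at_real_polynomial_function)
  then show ?case using mult by (simp add: real_polynomial_function.intros(3,4))
qed (simp add: real_polynomial_function.intros(2))

lemma smooth_real_polynomial_function:
  fixes f :: "real^'n \<Rightarrow> real"
  assumes "real_polynomial_function f"
  shows "smooth f"
proof -
  have "real_polynomial_function (iter_partial f is)" for "is"
    by (induction "is") (simp_all add: assms real_polynomial_function_partial)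
  then show ?thesis
    unfolding smooth_def by (blast intro: differentiable_at_real_polynomial_function)
qed

lemma iter_partial_mult_Leibniz:
  assumes "smooth F" "smooth G"
  shows "\<exists>L. iter_partial (\<lambda>x. F x * G x) is
             = (\<lambda>x. \<Sum>p\<leftarrow>L. iter_partial F (fst p) x * iter_partial G (snd p) x)"
proof (induction "is")
  case Nil
  show ?case by (intro exI[of _ "[([], [])]"]) simp
next
  case (Cons i "is")
  then obtain L where L: "iter_partial (\<lambda>x. F x * G x) is
       = (\<lambda>x. \<Sum>p\<leftarrow>L. iter_partial F (fst p) x * iter_partial G (snd p) x)" by blast
  define L' where "L' = concat (map (\<lambda>p. [(i # fst p, snd p), (fst p, i # snd p)]) L)"
  have "iter_partial (\<lambda>x. F x * G x) (i # is) x
      = (\<Sum>p\<leftarrow>L. partial (iter_partial F (fst p)) i x * iter_partial G (snd p) x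
           + iter_partial F (fst p) x * partial (iter_partial G (snd p)) i x)" for x
    using assms unfolding smooth_def by (simp add: L partial_sum_list_mult)
  also have "\<dots> x = (\<Sum>p\<leftarrow>L'. iter_partial F (fst p) x * iter_partial G (snd p) x)" for x
    unfolding L'_def by (induction L) auto
  finally show ?case by blast
qed

lemma smooth_mult:
  assumes "smooth F" "smooth G"
  shows "smooth (\<lambda>x. F x * G x)"
  unfolding smooth_def
proof (intro allI)
  fix "is" x
  obtain L where "iter_partial (\<lambda>x. F x * G x) is
       = (\<lambda>x. \<Sum>p\<leftarrow>L. iter_partial F (fst p) x * iter_partial G (snd p) x)"
    using iter_partial_mult_Leibniz[OF assms] by blast
  then show "iter_partial (\<lambda>x. F x * G x) is differentiable (at x)"
    using assms unfolding smooth_def by (simp add: differentiable_sum_list_mult)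
qed

lemma Cc_inf_mult_real_polynomial_function:
  fixes f :: "real^'n \<Rightarrow> real"
  assumes "f \<in> Cc_inf" "real_polynomial_function R"
  shows "(\<lambda>x. f x * R x) \<in> Cc_inf"
proof -
  have "closure {x. f x * R x \<noteq> 0} \<subseteq> closure {x. f x \<noteq> 0}"
    by (rule closure_mono) auto
  moreover have "compact (closure {x. f x \<noteq> 0} \<inter> closure {x. f x * R x \<noteq> 0})"
    using assms(1) unfolding Cc_inf_def by (simp add: compact_Int_closed)
  ultimately have "compact (closure {x. f x * R x \<noteq> 0})"
    by (simp add: inf.absorb2)
  with assms show ?thesis
    by (simp add: Cc_inf_def smooth_mult smooth_real_polynomial_function)
qed

lemma times_bcontfun:
  fixes f g :: "'a::topological_space \<Rightarrow> 'b::real_normed_algebra"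
  assumes "f \<in> bcontfun" "g \<in> bcontfun"
  shows "(\<lambda>x. f x * g x) \<in> bcontfun"
proof -
  have "continuous_on UNIV (\<lambda>x. f x * g x)"
    using assms unfolding bcontfun_def by (auto intro: continuous_intros)
  moreover obtain B C where "\<And>x. norm (f x) \<le> B" "\<And>x. norm (g x) \<le> C"
    using assms unfolding bcontfun_def bounded_iff by blast
  then have "norm (f x * g x) \<le> B * C" for x
    by (meson norm_ge_zero norm_mult_ineq order_trans mult_mono)
  ultimately show ?thesis by (rule bcontfun_normI)
qed

lemma sum_bcontfun:
  fixes f :: "'i \<Rightarrow> 'a::topological_space \<Rightarrow> 'b::real_normed_vector"
  shows "(\<And>j. j \<in> A \<Longrightarrow> f j \<in> bcontfun) \<Longrightarrow> (\<lambda>x. \<Sum>j\<in>A. f j x) \<in> bcontfun"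
  by (induction A rule: infinite_finite_induct) (auto intro: plus_cont const_bcontfun)

lemma bcontfun_if_vanishing_outside_compact:
  fixes g :: "'a::topological_space \<Rightarrow> 'b::real_normed_vector"
  assumes "continuous_on UNIV g" "compact K" "\<And>x. x \<notin> K \<Longrightarrow> g x = 0"
  shows "g \<in> bcontfun"
proof -
  have "bounded (g ` K)"
    using assms(1,2)
    by (meson compact_continuous_image compact_imp_bounded continuous_on_subset top_greatest)
  then have "bounded (insert 0 (g ` K))" by simp
  moreover have "range g \<subseteq> insert 0 (g ` K)" using assms(3) by blast
  ultimately show ?thesis
    using assms(1) bounded_subset unfolding bcontfun_def by blast
qed

lemma iter_partial_eq_0_outside_support:
  fixes f :: "real^'n \<Rightarrow> real"
  shows "x \<notin> closure {x. f x \<noteq> 0} \<Longrightarrow> iter_partial f is x = 0"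
proof (induction "is" arbitrary: x)
  case Nil
  then show ?case using closure_subset by force
next
  case (Cons i "is")
  show ?case
    by (simp, rule partial_eq_0_on_open[of "- closure {x. f x \<noteq> 0}"]) (use Cons in auto)
qed

lemma Cc_inf_differentiable:
  assumes "f \<in> Cc_inf"
  shows "f differentiable (at x)"
proof -
  have "iter_partial f [] differentiable (at x)"
    using assms unfolding Cc_inf_def smooth_def by blast
  then show ?thesis by simp
qed

lemma continuous_on_iter_partial_Cc_inf:
  "f \<in> Cc_inf \<Longrightarrow> continuous_on UNIV (iter_partial f is)"
  unfolding Cc_inf_def smooth_def
  by (simp add: continuous_at_imp_continuous_on differentiable_imp_continuous_within)

lemma Cc_inf_iter_partial_mult_bcontfun:
  fixes f g :: "real^'n \<Rightarrow> real"
  assumes "f \<in> Cc_inf" "continuous_on UNIV g"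
  shows "(\<lambda>x. iter_partial f is x * g x) \<in> bcontfun"
  using assms continuous_on_iter_partial_Cc_inf[OF assms(1)]
  by (intro bcontfun_if_vanishing_outside_compact[where K = "closure {x. f x \<noteq> 0}"])
     (auto intro: continuous_intros iter_partial_eq_0_outside_support simp: Cc_inf_def)

lemma Cc_inf_iter_partial_bcontfun:
  "f \<in> Cc_inf \<Longrightarrow> iter_partial f is \<in> bcontfun"
  using Cc_inf_iter_partial_mult_bcontfun[of f "\<lambda>_. 1"] by simp

lemma C1b_differentiable: "\<psi> \<in> C1b \<Longrightarrow> \<psi> differentiable (at x)"
  by (simp add: C1b_def)

lemma C1b_continuous_partial: "\<psi> \<in> C1b \<Longrightarrow> continuous_on UNIV (partial \<psi> i)"
  by (simp add: C1b_def)

lemma C1b_bcontfun: "\<psi> \<in> C1b \<Longrightarrow> \<psi> \<in> bcontfun"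
  unfolding C1b_def bcontfun_def
  by (auto intro: continuous_at_imp_continuous_on differentiable_imp_continuous_within)

lemma C1b_partial_bcontfun: "\<psi> \<in> C1b \<Longrightarrow> partial \<psi> i \<in> bcontfun"
  by (simp add: C1b_def bcontfun_def)

lemma bcontfun_compose:
  assumes "g \<in> bcontfun" "continuous_on UNIV U"
  shows "(\<lambda>x. g (U x)) \<in> bcontfun"
proof -
  have "range (\<lambda>x. g (U x)) \<subseteq> range g" by auto
  then show ?thesis
    using assms bounded_subset unfolding bcontfun_def
    by (auto intro: continuous_on_compose2[of UNIV g UNIV U])
qed

lemma continuous_on_vec_lambda_C1b:
  "(\<And>j. u j \<in> C1b) \<Longrightarrow> continuous_on UNIV (\<lambda>x. \<chi> j. u j x)"
  using C1b_bcontfun unfolding bcontfun_def by (auto intro!: continuous_on_vec_lambda)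

lemma C1b_comp_vec_lambda:
  fixes \<psi> :: "real^'m \<Rightarrow> real" and u :: "'m \<Rightarrow> real^'n \<Rightarrow> real"
  assumes \<psi>: "\<psi> \<in> C1b" and u: "\<And>j. u j \<in> C1b"
  shows "(\<lambda>x. \<psi> (\<chi> j. u j x)) \<in> C1b"
proof -
  note cont_U = continuous_on_vec_lambda_C1b[OF u]
  have du: "\<And>j x. u j differentiable (at x)" using u C1b_differentiable by blast
  note chain = partial_comp_vec_lambda[where \<psi> = \<psi> and u = u]
  have d: "(\<lambda>x. \<psi> (\<chi> j. u j x)) differentiable (at x)" for x
    using C1b_differentiable[OF \<psi>] du by (rule chain(1))
  have "(\<lambda>x. partial \<psi> j (\<chi> k. u k x)) \<in> bcontfun" for j
    by (rule bcontfun_compose[OF C1b_partial_bcontfun[OF \<psi>] cont_U])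
  then have "(\<lambda>x. \<Sum>j\<in>UNIV. partial \<psi> j (\<chi> k. u k x) * partial (u j) i x) \<in> bcontfun" for i
    using C1b_partial_bcontfun[OF u] by (intro sum_bcontfun times_bcontfun)
  moreover have "partial (\<lambda>x. \<psi> (\<chi> j. u j x)) i
      = (\<lambda>x. \<Sum>j\<in>UNIV. partial \<psi> j (\<chi> k. u k x) * partial (u j) i x)" for i
    using C1b_differentiable[OF \<psi>] du by (intro ext chain(2))
  ultimately have "partial (\<lambda>x. \<psi> (\<chi> j. u j x)) i \<in> bcontfun" for i
    by simp
  moreover have "(\<lambda>x. \<psi> (\<chi> j. u j x)) \<in> bcontfun"
    using bcontfun_compose[OF C1b_bcontfun[OF \<psi>] cont_U] .
  moreover note d
  ultimately show ?thesis
    unfolding C1b_def bcontfun_def by blast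
qed

section \<open>Polynomial approximation in \<open>C\<^sup>1\<close>\<close>

definition vec_upd :: "real^'n \<Rightarrow> 'n \<Rightarrow> real \<Rightarrow> real^'n" where
  "vec_upd x i s = (\<chi> j. if j = i then s else x $ j)"

lemma vec_upd_nth [simp]: "vec_upd x i s $ i = s" "j \<noteq> i \<Longrightarrow> vec_upd x i s $ j = x $ j"
  by (simp_all add: vec_upd_def)

lemma vec_upd_vec_upd [simp]: "vec_upd (vec_upd x i s) i t = vec_upd x i t"
  by (simp add: vec_upd_def vec_eq_iff)

lemma vec_upd_self [simp]: "vec_upd x i (x $ i) = x"
  by (simp add: vec_upd_def vec_eq_iff)

lemma vec_upd_eq_add_axis: "vec_upd x i s = vec_upd x i 0 + s *\<^sub>R axis i 1"
  by (simp add: vec_upd_def vec_eq_iff axis_def)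

lemma add_axis_eq_vec_upd: "x + t *\<^sub>R axis i 1 = vec_upd x i (x $ i + t)"
  by (simp add: vec_upd_def vec_eq_iff axis_def)

lemma bounded_linear_vec_upd_0: "bounded_linear (\<lambda>x::real^'n. vec_upd x i 0)"
  unfolding linear_conv_bounded_linear[symmetric]
  by (rule linearI) (simp_all add: vec_upd_def vec_eq_iff)

lemma real_polynomial_function_vec_upd:
  assumes "real_polynomial_function g"
  shows "real_polynomial_function (\<lambda>x::real^'n. g (vec_upd x i s))"
proof -
  have "polynomial_function (\<lambda>x::real^'n. vec_upd x i 0 + s *\<^sub>R axis i 1)"
    by (intro polynomial_function_add polynomial_function_bounded_linear bounded_linear_vec_upd_0
        polynomial_function_const)
  then have "polynomial_function (\<lambda>x::real^'n. vec_upd x i s)"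
    by (subst vec_upd_eq_add_axis)
  then show ?thesis
    using real_polynomial_function_compose assms by (auto simp: o_def)
qed

lemma has_real_derivative_partial_vec_upd:
  assumes "F differentiable (at (vec_upd x i t))"
  shows "((\<lambda>t. F (vec_upd x i t)) has_real_derivative partial F i (vec_upd x i t)) (at t)"
proof -
  have "(\<lambda>s. F (vec_upd x i t + s *\<^sub>R axis i 1)) = (\<lambda>s. F (vec_upd x i (s + t)))"
    by (simp add: add_axis_eq_vec_upd add.commute)
  then show ?thesis
    using has_real_derivative_partial[OF assms, of i] DERIV_shift[of "\<lambda>t. F (vec_upd x i t)" _ 0 t]
    by simp
qed

lemma abs_diff_vec_upd_le:
  assumes "\<And>y. F differentiable (at y)"
    and "\<And>t. t \<in> {a..b} \<Longrightarrow> \<bar>partial F i (vec_upd x i t)\<bar> \<le> B"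
    and "s \<in> {a..b}" "t \<in> {a..b}"
  shows "\<bar>F (vec_upd x i s) - F (vec_upd x i t)\<bar> \<le> B * \<bar>s - t\<bar>"
proof -
  have "((\<lambda>t. F (vec_upd x i t)) has_real_derivative partial F i (vec_upd x i z)) (at z within {a..b})"
    for z
    using has_real_derivative_partial_vec_upd assms(1) has_field_derivative_at_within by blast
  then show ?thesis
    using field_differentiable_bound[of "{a..b}" "\<lambda>t. F (vec_upd x i t)"
        "\<lambda>t. partial F i (vec_upd x i t)" B s t] assms(2-4)
    by auto
qed

text \<open>\<open>Q\<close> as a polynomial in \<open>x $ i\<close> whose coefficients do not depend on \<open>x $ i\<close>.\<close>

definition axis_expansion ::
    "'n \<Rightarrow> (real^'n \<Rightarrow> real) \<Rightarrow> nat \<Rightarrow> (nat \<Rightarrow> real^'n \<Rightarrow> real) \<Rightarrow> bool" where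
  "axis_expansion i Q N c \<longleftrightarrow> (\<forall>k. real_polynomial_function (c k)) \<and> (\<forall>k>N. \<forall>y. c k y = 0)
     \<and> (\<forall>x. Q x = (\<Sum>k\<le>N. c k (vec_upd x i 0) * (x $ i) ^ k))"

lemma axis_expansion_mono:
  assumes "axis_expansion i Q N c" "N \<le> M"
  shows "Q x = (\<Sum>k\<le>M. c k (vec_upd x i 0) * (x $ i) ^ k)"
proof -
  have "(\<Sum>k\<le>N. c k (vec_upd x i 0) * (x $ i) ^ k) = (\<Sum>k\<le>M. c k (vec_upd x i 0) * (x $ i) ^ k)"
    using assms unfolding axis_expansion_def by (intro sum.mono_neutral_left) auto
  then show ?thesis using assms unfolding axis_expansion_def by simp
qed

lemma axis_expansion_linear:
  assumes "bounded_linear L"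
  shows "\<exists>c. axis_expansion i L 1 c"
proof -
  interpret bounded_linear L by (rule assms)
  define c where "c k = (if k = 0 then L else if k = 1 then (\<lambda>_. L (axis i 1)) else (\<lambda>_. 0))"
    for k :: nat
  have "L x = (\<Sum>k\<le>1. c k (vec_upd x i 0) * (x $ i) ^ k)" for x
  proof -
    have "L x = L (vec_upd x i 0 + (x $ i) *\<^sub>R axis i 1)"
      by (simp only: vec_upd_eq_add_axis[symmetric] vec_upd_self)
    also have "\<dots> = L (vec_upd x i 0) + x $ i * L (axis i 1)"
      by (simp only: add scaleR real_scaleR_def)
    also have "\<dots> = (\<Sum>k\<le>1. c k (vec_upd x i 0) * (x $ i) ^ k)"
      by (simp add: c_def)
    finally show ?thesis .
  qed
  moreover have "real_polynomial_function (c k)" for k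
    using assms unfolding c_def by (simp add: real_polynomial_function.intros(1,2))
  moreover have "\<forall>k>1. \<forall>y. c k y = 0" by (simp add: c_def)
  ultimately show ?thesis
    unfolding axis_expansion_def by blast
qed

lemma axis_expansion_add:
  assumes "axis_expansion i f N1 c1" "axis_expansion i g N2 c2"
  shows "axis_expansion i (\<lambda>x. f x + g x) (max N1 N2) (\<lambda>k y. c1 k y + c2 k y)"
  using assms axis_expansion_mono[OF assms(1), of "max N1 N2"]
    axis_expansion_mono[OF assms(2), of "max N1 N2"]
  unfolding axis_expansion_def
  by (simp add: sum.distrib distrib_right real_polynomial_function.intros(3))

lemma axis_expansion_mult:
  assumes e1: "axis_expansion i f N1 c1" and e2: "axis_expansion i g N2 c2"
  shows "axis_expansion i (\<lambda>x. f x * g x) (N1 + N2) (\<lambda>r y. \<Sum>k\<le>r. c1 k y * c2 (r - k) y)"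
proof -
  have "(\<Sum>k\<le>r. c1 k y * c2 (r - k) y) = 0" if "r > N1 + N2" for r y
  proof (rule sum.neutral, intro ballI)
    fix k assume "k \<in> {..r}"
    then have "k > N1 \<or> r - k > N2" using that by auto
    then show "c1 k y * c2 (r - k) y = 0" using e1 e2 unfolding axis_expansion_def by auto
  qed
  moreover have "f x * g x = (\<Sum>r\<le>N1 + N2. (\<Sum>k\<le>r. c1 k (vec_upd x i 0) * c2 (r - k) (vec_upd x i 0))
      * (x $ i) ^ r)" for x
    using e1 e2 polynomial_product[of N1 "\<lambda>k. c1 k (vec_upd x i 0)" N2 "\<lambda>k. c2 k (vec_upd x i 0)"]
    unfolding axis_expansion_def by simp
  moreover have "real_polynomial_function (\<lambda>y. \<Sum>k\<le>r. c1 k y * c2 (r - k) y)" for r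
    using e1 e2 unfolding axis_expansion_def
    by (simp add: real_polynomial_function_sum real_polynomial_function.intros(4))
  ultimately show ?thesis
    unfolding axis_expansion_def by blast
qed

lemma real_polynomial_function_axis_expansion:
  fixes Q :: "real^'n \<Rightarrow> real"
  assumes "real_polynomial_function Q"
  shows "\<exists>N c. axis_expansion i Q N c"
  using assms
proof (induction Q)
  case (const a)
  have "axis_expansion i (\<lambda>_. a) 0 (\<lambda>k _. if k = 0 then a else 0)"
    unfolding axis_expansion_def by (simp add: real_polynomial_function.intros(2))
  then show ?case by blast
next
  case (linear L)
  then show ?case by (blast dest: axis_expansion_linear)
next
  case (add f g)
  then show ?case by (blast dest: axis_expansion_add)
next
  case (mult f g)
  then show ?case by (blast dest: axis_expansion_mult)
qed

lemma real_polynomial_function_antiderivative: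
  fixes Q :: "real^'n \<Rightarrow> real"
  assumes "real_polynomial_function Q"
  shows "\<exists>R. real_polynomial_function R \<and> (\<forall>x. partial R i x = Q x)"
proof -
  obtain N c where e: "axis_expansion i Q N c"
    using real_polynomial_function_axis_expansion[OF assms] by blast
  define R where "R x = (\<Sum>k\<le>N. c k (vec_upd x i 0) * (x $ i) ^ Suc k / real (Suc k))" for x
  have "real_polynomial_function (\<lambda>x::real^'n. x $ i)"
    by (rule real_polynomial_function.intros(1)) (rule bounded_linear_vec_nth)
  then have R: "real_polynomial_function R"
    using e unfolding R_def axis_expansion_def
    by (intro real_polynomial_function_sum real_polynomial_function_divide
        real_polynomial_function.intros(4) real_polynomial_function_vec_upd
        real_polynomial_function_power) auto
  have "partial R i x = Q x" for x
  proof (rule partial_eqI)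
    show "R differentiable (at x)" using R by (rule differentiable_at_real_polynomial_function)
    have "((\<lambda>t. \<Sum>k\<le>N. c k (vec_upd x i 0) * (x $ i + t) ^ Suc k / real (Suc k))
            has_real_derivative (\<Sum>k\<le>N. c k (vec_upd x i 0) * (x $ i) ^ k)) (at 0)"
    proof (rule DERIV_sum)
      fix k
      have "((\<lambda>t. c k (vec_upd x i 0) * (x $ i + t) ^ Suc k / real (Suc k)) has_real_derivative
          c k (vec_upd x i 0) * (real (Suc k) * (1 * (x $ i + 0) ^ (Suc k - Suc 0))) / real (Suc k)) (at 0)"
        by (intro DERIV_cdivide DERIV_cmult DERIV_power) (auto intro!: derivative_eq_intros)
      then show "((\<lambda>t. c k (vec_upd x i 0) * (x $ i + t) ^ Suc k / real (Suc k)) has_real_derivative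
          c k (vec_upd x i 0) * (x $ i) ^ k) (at 0)"
        by simp
    qed
    then show "((\<lambda>t. R (x + t *\<^sub>R axis i 1)) has_real_derivative Q x) (at 0)"
      using e unfolding R_def axis_expansion_def add_axis_eq_vec_upd by simp
  qed
  with R show ?thesis by blast
qed

lemma real_polynomial_function_antiderivative_face:
  fixes Q P :: "real^'n \<Rightarrow> real"
  assumes "real_polynomial_function Q" "real_polynomial_function P"
  shows "\<exists>R. real_polynomial_function R \<and> (\<forall>x. partial R i x = Q x) \<and>
           (\<forall>x. R (vec_upd x i a) = P (vec_upd x i a))"
proof -
  obtain R0 where R0: "real_polynomial_function R0" "\<And>x. partial R0 i x = Q x"
    using real_polynomial_function_antiderivative[OF assms(1)] by blast
  define H where "H x = P (vec_upd x i a) - R0 (vec_upd x i a)" for x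
  have H: "real_polynomial_function H"
    unfolding H_def
    by (intro real_polynomial_function_diff real_polynomial_function_vec_upd assms(2) R0(1))
  have "partial H i x = 0" for x
    using differentiable_at_real_polynomial_function[OF H]
    by (rule partial_eqI) (simp add: H_def add_axis_eq_vec_upd)
  then have "partial (\<lambda>x. R0 x + H x) i x = Q x" for x
    using R0 H by (simp add: partial_add differentiable_at_real_polynomial_function)
  moreover have "real_polynomial_function (\<lambda>x. R0 x + H x)"
    by (intro real_polynomial_function.intros(3) R0(1) H)
  ultimately show ?thesis by (intro exI[of _ "\<lambda>x. R0 x + H x"]) (simp add: H_def)
qed

lemma mem_cbox_uniform_cart: "x \<in> cbox (- (\<chi> j. r)) (\<chi> j. r) \<longleftrightarrow> (\<forall>j. \<bar>x $ j\<bar> \<le> r)"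
  for x :: "real^'n"
  unfolding mem_box_cart by (simp add: abs_le_iff minus_le_iff conj_commute)

lemma vec_upd_mem_cbox_uniform:
  "x \<in> cbox (- (\<chi> j. r)) (\<chi> j. r) \<Longrightarrow> t \<in> {-r..r} \<Longrightarrow> vec_upd x i t \<in> cbox (- (\<chi> j. r)) (\<chi> j. r)"
  unfolding mem_cbox_uniform_cart by (metis abs_le_iff atLeastAtMost_iff minus_le_iff vec_upd_nth)

lemma compact_subset_uniform_cbox:
  fixes K :: "(real^'n) set"
  assumes "compact K"
  obtains r where "r > 0" "K \<subseteq> cbox (- (\<chi> j. r)) (\<chi> j. r)"
proof -
  obtain r where "r > 0" "\<forall>x\<in>K. norm x \<le> r"
    using compact_imp_bounded[OF assms] bounded_pos by blast
  then show ?thesis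
    using that norm_bound_component_le_cart unfolding mem_cbox_uniform_cart subset_iff by blast
qed

lemma real_polynomial_function_C1_approximation:
  fixes \<psi> :: "real^'n \<Rightarrow> real"
  assumes diff: "\<And>x. \<psi> differentiable (at x)" and cont: "continuous_on UNIV (partial \<psi> i)"
    and "compact K" "e > 0"
  shows "\<exists>R. real_polynomial_function R \<and>
           (\<forall>x\<in>K. \<bar>\<psi> x - R x\<bar> \<le> e \<and> \<bar>partial \<psi> i x - partial R i x\<bar> \<le> e)"
proof -
  obtain r where "r > 0" and K: "K \<subseteq> cbox (- (\<chi> j. r)) (\<chi> j. r)"
    using compact_subset_uniform_cbox[OF \<open>compact K\<close>] by blast
  let ?B = "cbox (- (\<chi> j. r)) ((\<chi> j. r) :: real^'n)"
  note vec_upd_B = vec_upd_mem_cbox_uniform[where r = r and i = i]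
  define \<delta> where "\<delta> = e / (2 * r + 1)"
  have "\<delta> > 0" "\<delta> \<le> e" using \<open>e > 0\<close> \<open>r > 0\<close> by (simp_all add: \<delta>_def field_simps)
  have "compact ?B" "continuous_on ?B \<psi>"
    using diff by (auto simp: continuous_at_imp_continuous_on differentiable_imp_continuous_within)
  from Stone_Weierstrass_real_polynomial_function[OF this \<open>\<delta> > 0\<close>]
  obtain P where P: "real_polynomial_function P" "\<And>x. x \<in> ?B \<Longrightarrow> \<bar>\<psi> x - P x\<bar> < \<delta>" by blast
  obtain Q where Q: "real_polynomial_function Q" "\<And>x. x \<in> ?B \<Longrightarrow> \<bar>partial \<psi> i x - Q x\<bar> < \<delta>"
    using Stone_Weierstrass_real_polynomial_function[OF \<open>compact ?B\<close> continuous_on_subset[OF cont]]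
      \<open>\<delta> > 0\<close> by blast
  obtain R where R: "real_polynomial_function R" "\<And>x. partial R i x = Q x"
    "\<And>x. R (vec_upd x i (-r)) = P (vec_upd x i (-r))"
    using real_polynomial_function_antiderivative_face[OF Q(1) P(1)] by blast
  have "\<bar>\<psi> x - R x\<bar> \<le> e" if "x \<in> ?B" for x
  proof -
    define y where "y = vec_upd x i (-r)"
    have "x $ i \<in> {-r..r}"
      using \<open>x \<in> ?B\<close> unfolding mem_cbox_uniform_cart by (simp add: abs_le_iff minus_le_iff)
    have "\<bar>partial (\<lambda>z. R z - \<psi> z) i (vec_upd x i t)\<bar> \<le> \<delta>" if "t \<in> {-r..r}" for t
      using Q(2)[OF vec_upd_B[OF \<open>x \<in> ?B\<close> that]] R diff
      by (simp add: partial_diff differentiable_at_real_polynomial_function abs_minus_commute)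
    then have "\<bar>(R x - \<psi> x) - (R y - \<psi> y)\<bar> \<le> \<delta> * (2 * r)"
      using abs_diff_vec_upd_le[of "\<lambda>z. R z - \<psi> z" "-r" r i x \<delta> "x $ i" "-r"]
        \<open>x $ i \<in> {-r..r}\<close> \<open>r > 0\<close> \<open>\<delta> > 0\<close> R(1) diff
      by (simp add: y_def differentiable_at_real_polynomial_function)
        (smt (verit, best) mult_left_mono)
    moreover have "\<bar>\<psi> y - R y\<bar> \<le> \<delta>"
      using P(2)[OF vec_upd_B[OF \<open>x \<in> ?B\<close>, of "-r"]] R(3) \<open>r > 0\<close> by (simp add: y_def)
    ultimately have "\<bar>\<psi> x - R x\<bar> \<le> \<delta> * (2 * r + 1)" by (simp add: algebra_simps)
    also have "\<dots> = e" using \<open>r > 0\<close> by (simp add: \<delta>_def)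
    finally show ?thesis .
  qed
  moreover have "\<bar>partial \<psi> i x - partial R i x\<bar> \<le> e" if "x \<in> ?B" for x
    using Q(2)[OF that] R(2) \<open>\<delta> \<le> e\<close> by simp
  ultimately show ?thesis
    using R(1) K by blast
qed

section \<open>\<open>L\<^sup>p\<close> and integrals against bounded continuous functions\<close>

lemma measurable_bcontfun:
  assumes "sets \<mu> = sets borel" "g \<in> bcontfun"
  shows "g \<in> borel_measurable \<mu>"
  using assms(2) unfolding measurable_cong_sets[OF assms(1) refl] bcontfun_def
  by (simp add: borel_measurable_continuous_onI)

lemma integrable_bcontfun_mult:
  fixes g \<phi> :: "'a::topological_space \<Rightarrow> real"
  assumes "sets \<mu> = sets borel" "g \<in> bcontfun" "integrable \<mu> \<phi>"
  shows "integrable \<mu> (\<lambda>x. g x * \<phi> x)"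
proof -
  obtain C where C: "\<And>x. \<bar>g x\<bar> \<le> C"
    using assms(2) unfolding bcontfun_def bounded_iff by auto
  have "norm (g x * \<phi> x) \<le> norm (C * \<phi> x)" for x
  proof -
    have "\<bar>g x\<bar> * \<bar>\<phi> x\<bar> \<le> \<bar>C\<bar> * \<bar>\<phi> x\<bar>"
      using C[of x] by (intro mult_right_mono) auto
    then show ?thesis by (simp add: abs_mult)
  qed
  then have "AE x in \<mu>. norm (g x * \<phi> x) \<le> norm (C * \<phi> x)" by simp
  moreover have "(\<lambda>x. g x * \<phi> x) \<in> borel_measurable \<mu>"
    using measurable_bcontfun[OF assms(1,2)] borel_measurable_integrable[OF assms(3)]
    by (rule borel_measurable_times)
  moreover have "integrable \<mu> (\<lambda>x. C * \<phi> x)" using assms(3) by simp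
  ultimately show ?thesis
    using Bochner_Integration.integrable_bound by blast
qed

lemma Lp_measurable: "\<phi> \<in> Lp \<mu> p \<Longrightarrow> \<phi> \<in> borel_measurable \<mu>"
  by (simp add: Lp_def)

lemma Lp_imp_integrable:
  assumes "finite_measure \<mu>" "p \<ge> 1" "\<phi> \<in> Lp \<mu> p"
  shows "integrable \<mu> \<phi>"
proof (rule integrableI_bounded)
  show m: "\<phi> \<in> borel_measurable \<mu>" using assms(3) by (rule Lp_measurable)
  have "\<bar>\<phi> x\<bar> \<le> 1 + \<bar>\<phi> x\<bar> powr p" for x
  proof (cases "\<bar>\<phi> x\<bar> \<le> 1")
    case False
    then have "\<bar>\<phi> x\<bar> powr 1 \<le> \<bar>\<phi> x\<bar> powr p" using assms(2) by (intro powr_mono) auto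
    then show ?thesis using False by simp
  qed (smt (verit) powr_ge_zero)
  then have "ennreal (norm (\<phi> x)) \<le> ennreal 1 + ennreal (\<bar>\<phi> x\<bar> powr p)" for x
    by (simp only: ennreal_plus[OF zero_le_one powr_ge_zero, symmetric] real_norm_def ennreal_leI)
  then have "(\<integral>\<^sup>+ x. ennreal (norm (\<phi> x)) \<partial>\<mu>) \<le> (\<integral>\<^sup>+ x. ennreal 1 + ennreal (\<bar>\<phi> x\<bar> powr p) \<partial>\<mu>)"
    by (intro nn_integral_mono)
  also have "\<dots> = emeasure \<mu> (space \<mu>) + (\<integral>\<^sup>+ x. ennreal (\<bar>\<phi> x\<bar> powr p) \<partial>\<mu>)"
    using m by (subst nn_integral_add) auto
  also have "\<dots> < \<infinity>"
    using assms(1,3) finite_measure.emeasure_finite unfolding Lp_def by (auto simp: top.not_eq_extremum)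
  finally show "(\<integral>\<^sup>+ x. ennreal (norm (\<phi> x)) \<partial>\<mu>) < \<infinity>" .
qed

lemma Lp_mult_bcontfun:
  assumes "sets \<mu> = sets borel" "g \<in> bcontfun" "\<phi> \<in> Lp \<mu> p" "p \<ge> 0"
  shows "(\<lambda>x. g x * \<phi> x) \<in> Lp \<mu> p"
  unfolding Lp_def
proof (intro CollectI conjI)
  show "(\<lambda>x. g x * \<phi> x) \<in> borel_measurable \<mu>"
    using measurable_bcontfun[OF assms(1,2)] Lp_measurable[OF assms(3)] by measurable
  obtain C where C: "\<And>x. \<bar>g x\<bar> \<le> C"
    using assms(2) unfolding bcontfun_def bounded_iff by auto
  have "\<bar>g x * \<phi> x\<bar> powr p \<le> C powr p * \<bar>\<phi> x\<bar> powr p" for x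
  proof -
    have "\<bar>g x * \<phi> x\<bar> powr p \<le> (C * \<bar>\<phi> x\<bar>) powr p"
      using C assms(4) by (intro powr_mono2) (auto simp: abs_mult mult_right_mono)
    also have "\<dots> = C powr p * \<bar>\<phi> x\<bar> powr p"
      using C[of x] by (simp add: powr_mult)
    finally show ?thesis .
  qed
  then have "(\<integral>\<^sup>+ x. ennreal (\<bar>g x * \<phi> x\<bar> powr p) \<partial>\<mu>)
      \<le> (\<integral>\<^sup>+ x. ennreal (C powr p) * ennreal (\<bar>\<phi> x\<bar> powr p) \<partial>\<mu>)"
    by (intro nn_integral_mono) (simp add: ennreal_mult'[symmetric] ennreal_leI)
  also have "\<dots> = ennreal (C powr p) * (\<integral>\<^sup>+ x. ennreal (\<bar>\<phi> x\<bar> powr p) \<partial>\<mu>)"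
    using Lp_measurable[OF assms(3)] by (intro nn_integral_cmult) auto
  also have "\<dots> < \<infinity>"
    using assms(3) unfolding Lp_def by (simp add: ennreal_mult_less_top)
  finally show "(\<integral>\<^sup>+ x. ennreal (\<bar>g x * \<phi> x\<bar> powr p) \<partial>\<mu>) < \<infinity>" .
qed

lemma powr_abs_add_le:
  fixes a b p :: real
  assumes "p \<ge> 0"
  shows "\<bar>a + b\<bar> powr p \<le> 2 powr p * (\<bar>a\<bar> powr p + \<bar>b\<bar> powr p)"
proof -
  have "\<bar>a + b\<bar> powr p \<le> (2 * max \<bar>a\<bar> \<bar>b\<bar>) powr p"
    using assms by (intro powr_mono2) auto
  also have "\<dots> = 2 powr p * max \<bar>a\<bar> \<bar>b\<bar> powr p"
    by (simp add: powr_mult)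
  also have "max \<bar>a\<bar> \<bar>b\<bar> powr p \<le> \<bar>a\<bar> powr p + \<bar>b\<bar> powr p"
    by (simp add: max_def)
  finally show ?thesis by simp
qed

lemma Lp_add:
  assumes "\<phi> \<in> Lp \<mu> p" "\<theta> \<in> Lp \<mu> p" "p \<ge> 0"
  shows "(\<lambda>x. \<phi> x + \<theta> x) \<in> Lp \<mu> p"
  unfolding Lp_def
proof (intro CollectI conjI)
  show "(\<lambda>x. \<phi> x + \<theta> x) \<in> borel_measurable \<mu>"
    using assms Lp_measurable by measurable
  have "(\<integral>\<^sup>+ x. ennreal (\<bar>\<phi> x + \<theta> x\<bar> powr p) \<partial>\<mu>)
      \<le> (\<integral>\<^sup>+ x. ennreal (2 powr p) * (ennreal (\<bar>\<phi> x\<bar> powr p) + ennreal (\<bar>\<theta> x\<bar> powr p)) \<partial>\<mu>)"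
    using powr_abs_add_le[OF assms(3)]
    by (intro nn_integral_mono) (simp add: ennreal_mult'[symmetric] ennreal_plus[symmetric] ennreal_leI
        del: ennreal_plus)
  also have "\<dots> = ennreal (2 powr p) *
      ((\<integral>\<^sup>+ x. ennreal (\<bar>\<phi> x\<bar> powr p) \<partial>\<mu>) + (\<integral>\<^sup>+ x. ennreal (\<bar>\<theta> x\<bar> powr p) \<partial>\<mu>))"
    using Lp_measurable[OF assms(1)] Lp_measurable[OF assms(2)]
    by (simp add: nn_integral_cmult nn_integral_add)
  also have "\<dots> < \<infinity>"
    using assms(1,2) unfolding Lp_def by (simp add: ennreal_mult_less_top)
  finally show "(\<integral>\<^sup>+ x. ennreal (\<bar>\<phi> x + \<theta> x\<bar> powr p) \<partial>\<mu>) < \<infinity>" .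
qed

lemma Lp_zero: "(\<lambda>_. 0) \<in> Lp \<mu> p"
  by (simp add: Lp_def)

lemma Lp_sum:
  assumes "\<And>j. j \<in> A \<Longrightarrow> f j \<in> Lp \<mu> p" "p \<ge> 0"
  shows "(\<lambda>x. \<Sum>j\<in>A. f j x) \<in> Lp \<mu> p"
  using assms by (induction A rule: infinite_finite_induct) (auto simp: Lp_zero intro!: Lp_add)

lemma Lp_const:
  assumes "finite_measure \<mu>"
  shows "(\<lambda>_. c) \<in> Lp \<mu> p"
  using finite_measure.emeasure_finite[OF assms, of "space \<mu>"]
  by (simp add: Lp_def ennreal_mult_less_top top.not_eq_extremum)

lemma Lp_diff:
  assumes "sets \<mu> = sets borel" "\<phi> \<in> Lp \<mu> p" "\<theta> \<in> Lp \<mu> p" "p \<ge> 0"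
  shows "(\<lambda>x. \<phi> x - \<theta> x) \<in> Lp \<mu> p"
  using Lp_add[OF assms(2) Lp_mult_bcontfun[OF assms(1) const_bcontfun assms(3,4)] assms(4), of "-1"]
  by simp

lemma abs_integral_mult_le:
  fixes g h :: "'a \<Rightarrow> real"
  assumes "integrable \<mu> (\<lambda>x. g x * h x)" "integrable \<mu> h" "\<And>x. \<bar>g x\<bar> \<le> B"
  shows "\<bar>\<integral>x. g x * h x \<partial>\<mu>\<bar> \<le> B * (\<integral>x. \<bar>h x\<bar> \<partial>\<mu>)"
proof -
  have "\<bar>\<integral>x. g x * h x \<partial>\<mu>\<bar> \<le> (\<integral>x. B * \<bar>h x\<bar> \<partial>\<mu>)"
  proof (rule order_trans[OF integral_norm_bound[of \<mu> "\<lambda>x. g x * h x", unfolded real_norm_def]])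
    show "(\<integral>x. \<bar>g x * h x\<bar> \<partial>\<mu>) \<le> (\<integral>x. B * \<bar>h x\<bar> \<partial>\<mu>)"
      using assms integrable_abs[OF assms(1)]
      by (intro integral_mono) (auto simp: abs_mult mult_right_mono)
  qed
  then show ?thesis by simp
qed

lemma integral_eq_0_by_uniform_approx:
  fixes g1 g2 h1 h2 :: "'a::topological_space \<Rightarrow> real"
  assumes "sets \<mu> = sets borel" "integrable \<mu> h1" "integrable \<mu> h2" "g1 \<in> bcontfun" "g2 \<in> bcontfun"
    and approx: "\<And>e. e > 0 \<Longrightarrow> \<exists>G1\<in>bcontfun. \<exists>G2\<in>bcontfun.
      (\<integral>x. G1 x * h1 x \<partial>\<mu>) + (\<integral>x. G2 x * h2 x \<partial>\<mu>) = 0 \<and>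
      (\<forall>x. \<bar>g1 x - G1 x\<bar> \<le> e \<and> \<bar>g2 x - G2 x\<bar> \<le> e)"
  shows "(\<integral>x. g1 x * h1 x \<partial>\<mu>) + (\<integral>x. g2 x * h2 x \<partial>\<mu>) = 0"
proof -
  define c where "c = (\<integral>x. \<bar>h1 x\<bar> \<partial>\<mu>) + (\<integral>x. \<bar>h2 x\<bar> \<partial>\<mu>) + 1"
  have "c > 0" unfolding c_def by (simp add: add_nonneg_pos)
  have "\<bar>(\<integral>x. g1 x * h1 x \<partial>\<mu>) + (\<integral>x. g2 x * h2 x \<partial>\<mu>)\<bar> \<le> 0 + e" if "e > 0" for e
  proof -
    obtain G1 G2 where G: "G1 \<in> bcontfun" "G2 \<in> bcontfun"
      "(\<integral>x. G1 x * h1 x \<partial>\<mu>) + (\<integral>x. G2 x * h2 x \<partial>\<mu>) = 0"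
      "\<And>x. \<bar>g1 x - G1 x\<bar> \<le> e / c" "\<And>x. \<bar>g2 x - G2 x\<bar> \<le> e / c"
      using approx[of "e / c"] \<open>e > 0\<close> \<open>c > 0\<close> by auto
    have int: "integrable \<mu> (\<lambda>x. g x * h x)" if "g \<in> bcontfun" "integrable \<mu> h"
      for g h :: "'a \<Rightarrow> real"
      using integrable_bcontfun_mult[OF assms(1) that] .
    have "(\<integral>x. g1 x * h1 x \<partial>\<mu>) + (\<integral>x. g2 x * h2 x \<partial>\<mu>)
        = (\<integral>x. (g1 x - G1 x) * h1 x \<partial>\<mu>) + (\<integral>x. (g2 x - G2 x) * h2 x \<partial>\<mu>)"
      using G(3) int[OF assms(4,2)] int[OF assms(5,3)] int[OF G(1) assms(2)] int[OF G(2) assms(3)]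
      by (simp add: left_diff_distrib)
    also have "\<bar>\<dots>\<bar> \<le> e / c * (\<integral>x. \<bar>h1 x\<bar> \<partial>\<mu>) + e / c * (\<integral>x. \<bar>h2 x\<bar> \<partial>\<mu>)"
      using abs_integral_mult_le[OF int[OF minus_cont[OF assms(4) G(1)] assms(2)] assms(2) G(4)]
        abs_integral_mult_le[OF int[OF minus_cont[OF assms(5) G(2)] assms(3)] assms(3) G(5)]
      by linarith
    also have "\<dots> = e / c * (c - 1)" by (simp add: c_def distrib_left)
    also have "\<dots> \<le> e / c * c" using \<open>e > 0\<close> \<open>c > 0\<close> by (intro mult_left_mono) auto
    also have "\<dots> = e" using \<open>c > 0\<close> by simp
    finally show ?thesis by simp
  qed
  then have "\<bar>(\<integral>x. g1 x * h1 x \<partial>\<mu>) + (\<integral>x. g2 x * h2 x \<partial>\<mu>)\<bar> \<le> 0"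
    by (rule field_le_epsilon)
  then show ?thesis by simp
qed

lemma Cc_inf_iter_partial_mult_le:
  fixes f :: "real^'n \<Rightarrow> real"
  assumes "f \<in> Cc_inf"
  obtains M where "M \<ge> 0"
    "\<And>g e x. e \<ge> 0 \<Longrightarrow> (\<And>y. y \<in> closure {x. f x \<noteq> 0} \<Longrightarrow> \<bar>g y\<bar> \<le> e)
       \<Longrightarrow> \<bar>iter_partial f is x * g x\<bar> \<le> M * e"
proof -
  obtain M where M: "\<And>x. \<bar>iter_partial f is x\<bar> \<le> M"
    using Cc_inf_iter_partial_bcontfun[OF assms] unfolding bcontfun_def bounded_iff by auto
  then have "M \<ge> 0" by (meson abs_ge_zero order_trans)
  moreover have "\<bar>iter_partial f is x * g x\<bar> \<le> M * e"
    if "e \<ge> 0" "\<And>y. y \<in> closure {x. f x \<noteq> 0} \<Longrightarrow> \<bar>g y\<bar> \<le> e" for g e x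
  proof (cases "x \<in> closure {x. f x \<noteq> 0}")
    case True
    then show ?thesis using M[of x] that by (simp add: abs_mult mult_mono)
  next
    case False
    then show ?thesis using iter_partial_eq_0_outside_support[OF False] \<open>M \<ge> 0\<close> that(1) by simp
  qed
  ultimately show ?thesis using that by blast
qed

lemma Cc_inf_mult_continuous_approx:
  fixes f c :: "real^'n \<Rightarrow> real"
  assumes f: "f \<in> Cc_inf" and "continuous_on UNIV c" "e > 0"
  shows "\<exists>P. real_polynomial_function P \<and> (\<forall>x. \<bar>f x * c x - f x * P x\<bar> \<le> e)"
proof -
  obtain M where M: "M \<ge> 0" "\<And>g e x. e \<ge> 0 \<Longrightarrow> (\<And>y. y \<in> closure {x. f x \<noteq> 0} \<Longrightarrow> \<bar>g y\<bar> \<le> e)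
       \<Longrightarrow> \<bar>f x * g x\<bar> \<le> M * e"
    using Cc_inf_iter_partial_mult_le[OF f, of "[]"] by auto
  have "e / (M + 1) > 0" using \<open>e > 0\<close> M by simp
  moreover have "compact (closure {x. f x \<noteq> 0})" using f by (simp only: Cc_inf_def mem_Collect_eq)
  ultimately obtain P where P: "real_polynomial_function P"
    "\<And>x. x \<in> closure {x. f x \<noteq> 0} \<Longrightarrow> \<bar>c x - P x\<bar> < e / (M + 1)"
    using Stone_Weierstrass_real_polynomial_function[OF _ continuous_on_subset[OF assms(2) subset_UNIV]]
    by blast
  have "\<bar>f x * (c x - P x)\<bar> \<le> M * (e / (M + 1))" for x
    using P(2) \<open>e / (M + 1) > 0\<close> by (intro M(2)) (auto intro: less_imp_le)
  also have "M * (e / (M + 1)) \<le> e"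
    using M \<open>e > 0\<close> by (simp add: field_simps)
  finally show ?thesis
    using P(1) by (auto simp: right_diff_distrib)
qed

lemma Cc_inf_mult_C1_approx:
  fixes f \<psi> :: "real^'n \<Rightarrow> real"
  assumes f: "f \<in> Cc_inf" and \<psi>: "\<And>x. \<psi> differentiable (at x)" "continuous_on UNIV (partial \<psi> i)"
    and "e > 0"
  shows "\<exists>R. real_polynomial_function R \<and> (\<forall>x. \<bar>f x * \<psi> x - f x * R x\<bar> \<le> e \<and>
           \<bar>partial f i x * \<psi> x + f x * partial \<psi> i x - partial (\<lambda>x. f x * R x) i x\<bar> \<le> e)"
proof -
  let ?K = "closure {x. f x \<noteq> 0}"
  obtain M0 where M0: "M0 \<ge> 0" "\<And>g e x. e \<ge> 0 \<Longrightarrow> (\<And>y. y \<in> ?K \<Longrightarrow> \<bar>g y\<bar> \<le> e)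
       \<Longrightarrow> \<bar>f x * g x\<bar> \<le> M0 * e"
    using Cc_inf_iter_partial_mult_le[OF f, of "[]"] by auto
  obtain M1 where M1: "M1 \<ge> 0" "\<And>g e x. e \<ge> 0 \<Longrightarrow> (\<And>y. y \<in> ?K \<Longrightarrow> \<bar>g y\<bar> \<le> e)
       \<Longrightarrow> \<bar>partial f i x * g x\<bar> \<le> M1 * e"
    using Cc_inf_iter_partial_mult_le[OF f, of "[i]"] by auto
  define \<epsilon> where "\<epsilon> = e / (M0 + M1 + 1)"
  have "\<epsilon> > 0" "(M0 + M1) * \<epsilon> \<le> e"
    using \<open>e > 0\<close> M0(1) M1(1) by (simp_all add: \<epsilon>_def field_simps)
  have "compact ?K" using f by (simp only: Cc_inf_def mem_Collect_eq)
  from real_polynomial_function_C1_approximation[OF \<psi> this \<open>\<epsilon> > 0\<close>]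
  obtain R where R: "real_polynomial_function R"
    "\<And>x. x \<in> ?K \<Longrightarrow> \<bar>\<psi> x - R x\<bar> \<le> \<epsilon> \<and> \<bar>partial \<psi> i x - partial R i x\<bar> \<le> \<epsilon>"
    by blast
  have "\<bar>f x * (\<psi> x - R x)\<bar> \<le> M0 * \<epsilon>" "\<bar>partial f i x * (\<psi> x - R x)\<bar> \<le> M1 * \<epsilon>"
    "\<bar>f x * (partial \<psi> i x - partial R i x)\<bar> \<le> M0 * \<epsilon>" for x
    using R(2) \<open>\<epsilon> > 0\<close> by (intro M0(2) M1(2); force)+
  moreover have "partial (\<lambda>x. f x * R x) i x = partial f i x * R x + f x * partial R i x" for x
    using Cc_inf_differentiable[OF f] differentiable_at_real_polynomial_function[OF R(1)]
    by (rule partial_mult)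
  ultimately have "\<bar>f x * \<psi> x - f x * R x\<bar> \<le> e \<and>
      \<bar>partial f i x * \<psi> x + f x * partial \<psi> i x - partial (\<lambda>x. f x * R x) i x\<bar> \<le> e" for x
    using \<open>(M0 + M1) * \<epsilon> \<le> e\<close> M1(1) \<open>\<epsilon> > 0\<close>
    by (simp add: algebra_simps) (smt (verit) mult_nonneg_nonneg)
  with R(1) show ?thesis by blast
qed

lemma integral_Cc_inf_mult_continuous_eq_0:
  fixes h c :: "real^'n \<Rightarrow> real"
  assumes "sets \<mu> = sets borel" "integrable \<mu> h" and orth: "\<And>g. g \<in> Cc_inf \<Longrightarrow> (\<integral>x. g x * h x \<partial>\<mu>) = 0"
    and f: "f \<in> Cc_inf" and "continuous_on UNIV c"
  shows "(\<integral>x. (f x * c x) * h x \<partial>\<mu>) = 0"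
proof -
  have "(\<integral>x. (f x * c x) * h x \<partial>\<mu>) + (\<integral>x. 0 * 0 \<partial>\<mu>) = 0"
  proof (rule integral_eq_0_by_uniform_approx[OF assms(1,2)])
    show "(\<lambda>x. f x * c x) \<in> bcontfun"
      using Cc_inf_iter_partial_mult_bcontfun[OF f assms(5), of "[]"] by simp
    fix e :: real assume "e > 0"
    then obtain P where P: "real_polynomial_function P" "\<forall>x. \<bar>f x * c x - f x * P x\<bar> \<le> e"
      using Cc_inf_mult_continuous_approx[OF f assms(5)] by blast
    have "(\<lambda>x. f x * P x) \<in> Cc_inf"
      by (rule Cc_inf_mult_real_polynomial_function[OF f P(1)])
    then show "\<exists>G1\<in>bcontfun. \<exists>G2\<in>bcontfun. (\<integral>x. G1 x * h x \<partial>\<mu>) + (\<integral>x. G2 x * 0 \<partial>\<mu>) = 0 \<and>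
        (\<forall>x. \<bar>f x * c x - G1 x\<bar> \<le> e \<and> \<bar>0 - G2 x\<bar> \<le> e)"
      using orth Cc_inf_iter_partial_bcontfun[of "\<lambda>x. f x * P x" "[]"] P(2) \<open>e > 0\<close> const_bcontfun
      by (intro bexI[of _ "\<lambda>x. f x * P x"] bexI[of _ "\<lambda>_. 0"]) auto
  qed (auto intro: const_bcontfun)
  then show ?thesis by simp
qed

lemma integral_Cc_inf_mult_sum_eq_0:
  fixes c h :: "'j \<Rightarrow> real^'n \<Rightarrow> real"
  assumes "sets \<mu> = sets borel" "finite J" and h: "\<And>j. integrable \<mu> (h j)"
    and orth: "\<And>g j. g \<in> Cc_inf \<Longrightarrow> (\<integral>x. g x * h j x \<partial>\<mu>) = 0"
    and c: "\<And>j. continuous_on UNIV (c j)" and f: "f \<in> Cc_inf"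
  shows "(\<integral>x. f x * (\<Sum>j\<in>J. c j x * h j x) \<partial>\<mu>) = 0"
proof -
  have "integrable \<mu> (\<lambda>x. (f x * c j x) * h j x)" for j
    using integrable_bcontfun_mult[OF assms(1) Cc_inf_iter_partial_mult_bcontfun[OF f c, of "[]"] h]
    by simp
  then have "(\<integral>x. f x * (\<Sum>j\<in>J. c j x * h j x) \<partial>\<mu>) = (\<Sum>j\<in>J. \<integral>x. (f x * c j x) * h j x \<partial>\<mu>)"
    using \<open>finite J\<close> by (simp add: sum_distrib_left mult.assoc)
  also have "\<dots> = 0"
    using integral_Cc_inf_mult_continuous_eq_0[OF assms(1) h orth f c] by simp
  finally show ?thesis .
qed

section \<open>Weak derivatives\<close>

lemma integral_Cc_inf_mult_C1b_eq_0:
  fixes \<mu> :: "(real^'n) measure"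
  assumes "sets \<mu> = sets borel" "integrable \<mu> \<phi>" "integrable \<mu> \<theta>"
    and wd: "\<And>g. g \<in> Cc_inf \<Longrightarrow> (\<integral>x. partial g i x * \<phi> x \<partial>\<mu>) + (\<integral>x. g x * \<theta> x \<partial>\<mu>) = 0"
    and f: "f \<in> Cc_inf" and \<psi>: "\<psi> \<in> C1b"
  shows "(\<integral>x. (partial f i x * \<psi> x + f x * partial \<psi> i x) * \<phi> x \<partial>\<mu>)
           + (\<integral>x. (f x * \<psi> x) * \<theta> x \<partial>\<mu>) = 0"
proof (rule integral_eq_0_by_uniform_approx[OF assms(1-3)])
  show "(\<lambda>x. partial f i x * \<psi> x + f x * partial \<psi> i x) \<in> bcontfun" "(\<lambda>x. f x * \<psi> x) \<in> bcontfun"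
    using Cc_inf_iter_partial_bcontfun[OF f, of "[]"] Cc_inf_iter_partial_bcontfun[OF f, of "[i]"]
      C1b_bcontfun[OF \<psi>] C1b_partial_bcontfun[OF \<psi>, of i]
    by (auto intro!: plus_cont times_bcontfun)
  fix e :: real assume "e > 0"
  then obtain R where R: "real_polynomial_function R"
    "\<forall>x. \<bar>f x * \<psi> x - f x * R x\<bar> \<le> e \<and>
       \<bar>partial f i x * \<psi> x + f x * partial \<psi> i x - partial (\<lambda>x. f x * R x) i x\<bar> \<le> e"
    using Cc_inf_mult_C1_approx[OF f C1b_differentiable[OF \<psi>] C1b_continuous_partial[OF \<psi>]]
    by blast
  have fR: "(\<lambda>x. f x * R x) \<in> Cc_inf"
    by (rule Cc_inf_mult_real_polynomial_function[OF f R(1)])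
  have "partial (\<lambda>x. f x * R x) i \<in> bcontfun" "(\<lambda>x. f x * R x) \<in> bcontfun"
    using Cc_inf_iter_partial_bcontfun[OF fR, of "[i]"] Cc_inf_iter_partial_bcontfun[OF fR, of "[]"]
    by auto
  with wd[OF fR] R(2) show "\<exists>G1\<in>bcontfun. \<exists>G2\<in>bcontfun.
    (\<integral>x. G1 x * \<phi> x \<partial>\<mu>) + (\<integral>x. G2 x * \<theta> x \<partial>\<mu>) = 0 \<and>
    (\<forall>x. \<bar>partial f i x * \<psi> x + f x * partial \<psi> i x - G1 x\<bar> \<le> e \<and> \<bar>f x * \<psi> x - G2 x\<bar> \<le> e)"
    by (intro bexI[of _ "partial (\<lambda>x. f x * R x) i"] bexI[of _ "\<lambda>x. f x * R x"]) auto
qed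

lemma weak_deriv_mult_C1b:
  fixes \<mu> :: "(real^'n) measure"
  assumes \<mu>: "finite_measure \<mu>" "sets \<mu> = sets borel" and "p \<ge> 1"
    and wd: "weak_deriv \<mu> p \<phi> i \<theta>" and "\<phi> \<in> Lp \<mu> p" and \<psi>: "\<psi> \<in> C1b"
  shows "weak_deriv \<mu> p (\<lambda>x. \<psi> x * \<phi> x) i (\<lambda>x. \<psi> x * \<theta> x + partial \<psi> i x * \<phi> x)"
  unfolding weak_deriv_def
proof (intro conjI ballI)
  have "\<theta> \<in> Lp \<mu> p" using wd by (simp add: weak_deriv_def)
  then show "(\<lambda>x. \<psi> x * \<theta> x + partial \<psi> i x * \<phi> x) \<in> Lp \<mu> p"
    using \<open>\<phi> \<in> Lp \<mu> p\<close> \<open>p \<ge> 1\<close> C1b_bcontfun[OF \<psi>] C1b_partial_bcontfun[OF \<psi>]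
    by (intro Lp_add Lp_mult_bcontfun[OF \<mu>(2)]) auto
  have int\<phi>: "integrable \<mu> \<phi>" and int\<theta>: "integrable \<mu> \<theta>"
    using Lp_imp_integrable[OF \<mu>(1) \<open>p \<ge> 1\<close>] \<open>\<phi> \<in> Lp \<mu> p\<close> \<open>\<theta> \<in> Lp \<mu> p\<close> by auto
  fix f :: "real^'n \<Rightarrow> real" assume f: "f \<in> Cc_inf"
  have f_bc: "f \<in> bcontfun" and df_bc: "partial f i \<in> bcontfun"
    using Cc_inf_iter_partial_bcontfun[OF f, of "[]"] Cc_inf_iter_partial_bcontfun[OF f, of "[i]"] by auto
  note \<psi>_bc = C1b_bcontfun[OF \<psi>] C1b_partial_bcontfun[OF \<psi>]
  have "(\<integral>x. (partial f i x * \<psi> x + f x * partial \<psi> i x) * \<phi> x \<partial>\<mu>)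
           + (\<integral>x. (f x * \<psi> x) * \<theta> x \<partial>\<mu>) = 0"
    using wd unfolding weak_deriv_def
    by (intro integral_Cc_inf_mult_C1b_eq_0[OF \<mu>(2) int\<phi> int\<theta> _ f \<psi>]) simp
  moreover have "(\<integral>x. (partial f i x * \<psi> x + f x * partial \<psi> i x) * \<phi> x \<partial>\<mu>)
      = (\<integral>x. partial f i x * (\<psi> x * \<phi> x) \<partial>\<mu>) + (\<integral>x. (f x * partial \<psi> i x) * \<phi> x \<partial>\<mu>)"
    using integrable_bcontfun_mult[OF \<mu>(2) times_bcontfun[OF df_bc \<psi>_bc(1)] int\<phi>]
      integrable_bcontfun_mult[OF \<mu>(2) times_bcontfun[OF f_bc \<psi>_bc(2)] int\<phi>]
    by (simp add: distrib_right mult.assoc)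
  moreover have "(\<integral>x. f x * (\<psi> x * \<theta> x + partial \<psi> i x * \<phi> x) \<partial>\<mu>)
      = (\<integral>x. (f x * \<psi> x) * \<theta> x \<partial>\<mu>) + (\<integral>x. (f x * partial \<psi> i x) * \<phi> x \<partial>\<mu>)"
    using integrable_bcontfun_mult[OF \<mu>(2) times_bcontfun[OF f_bc \<psi>_bc(1)] int\<theta>]
      integrable_bcontfun_mult[OF \<mu>(2) times_bcontfun[OF f_bc \<psi>_bc(2)] int\<phi>]
    by (simp add: distrib_left mult.assoc mult.left_commute)
  ultimately show "(\<integral>x. partial f i x * (\<psi> x * \<phi> x) \<partial>\<mu>)
      = - (\<integral>x. f x * (\<psi> x * \<theta> x + partial \<psi> i x * \<phi> x) \<partial>\<mu>)"
    by linarith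
qed

lemma W1p_mult_C1b:
  fixes \<mu> :: "(real^'n) measure"
  assumes "finite_measure \<mu>" "sets \<mu> = sets borel" "p \<ge> 1" "\<phi> \<in> W1p \<mu> p" "\<psi> \<in> C1b"
  shows "(\<lambda>x. \<psi> x * \<phi> x) \<in> W1p \<mu> p"
  unfolding W1p_def
proof (intro CollectI conjI allI)
  have "\<phi> \<in> Lp \<mu> p" using assms(4) by (simp add: W1p_def)
  then show "(\<lambda>x. \<psi> x * \<phi> x) \<in> Lp \<mu> p"
    using Lp_mult_bcontfun[OF assms(2) C1b_bcontfun[OF assms(5)]] assms(3) by simp
  fix i
  obtain \<theta> where "weak_deriv \<mu> p \<phi> i \<theta>" using assms(4) by (auto simp: W1p_def)
  then show "\<exists>\<theta>. weak_deriv \<mu> p (\<lambda>x. \<psi> x * \<phi> x) i \<theta>"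
    using weak_deriv_mult_C1b[OF assms(1-3) _ \<open>\<phi> \<in> Lp \<mu> p\<close> assms(5)] by blast
qed

lemma weak_deriv_C1b:
  fixes \<mu> :: "(real^'n) measure"
  assumes "finite_measure \<mu>" "sets \<mu> = sets borel" "p \<ge> 1"
    and "weak_deriv \<mu> p (\<lambda>_. 1) i \<theta>" "\<psi> \<in> C1b"
  shows "weak_deriv \<mu> p \<psi> i (\<lambda>x. \<psi> x * \<theta> x + partial \<psi> i x)"
  using weak_deriv_mult_C1b[OF assms(1-4) Lp_const[OF assms(1)] assms(5)] by simp

lemma weak_deriv_add_orthogonal:
  fixes \<mu> :: "(real^'n) measure"
  assumes "finite_measure \<mu>" "sets \<mu> = sets borel" "p \<ge> 1"
    and "weak_deriv \<mu> p \<phi> i \<theta>" "\<eta> \<in> Lp \<mu> p" "\<And>f. f \<in> Cc_inf \<Longrightarrow> (\<integral>x. f x * \<eta> x \<partial>\<mu>) = 0"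
  shows "weak_deriv \<mu> p \<phi> i (\<lambda>x. \<theta> x + \<eta> x)"
  unfolding weak_deriv_def
proof (intro conjI ballI)
  have "\<theta> \<in> Lp \<mu> p" using assms(4) by (simp add: weak_deriv_def)
  then show "(\<lambda>x. \<theta> x + \<eta> x) \<in> Lp \<mu> p" using assms(3,5) by (simp add: Lp_add)
  fix f :: "real^'n \<Rightarrow> real" assume f: "f \<in> Cc_inf"
  have "f \<in> bcontfun" using Cc_inf_iter_partial_bcontfun[OF f, of "[]"] by simp
  then have "integrable \<mu> (\<lambda>x. f x * \<theta> x)" "integrable \<mu> (\<lambda>x. f x * \<eta> x)"
    using Lp_imp_integrable[OF assms(1,3)] \<open>\<theta> \<in> Lp \<mu> p\<close> assms(5)
    by (auto intro: integrable_bcontfun_mult[OF assms(2)])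
  moreover have "(\<integral>x. partial f i x * \<phi> x \<partial>\<mu>) = - (\<integral>x. f x * \<theta> x \<partial>\<mu>)"
    using assms(4) f unfolding weak_deriv_def by blast
  ultimately show "(\<integral>x. partial f i x * \<phi> x \<partial>\<mu>) = - (\<integral>x. f x * (\<theta> x + \<eta> x) \<partial>\<mu>)"
    using assms(6)[OF f] by (simp add: distrib_left)
qed

lemma weak_deriv_diff_orthogonal:
  fixes \<mu> :: "(real^'n) measure"
  assumes "finite_measure \<mu>" "sets \<mu> = sets borel" "p \<ge> 1"
    and "weak_deriv \<mu> p \<phi> i \<theta>" "weak_deriv \<mu> p \<phi> i \<theta>'" "f \<in> Cc_inf"
  shows "(\<integral>x. f x * (\<theta> x - \<theta>' x) \<partial>\<mu>) = 0"
proof -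
  have "f \<in> bcontfun" using Cc_inf_iter_partial_bcontfun[OF assms(6), of "[]"] by simp
  then have "integrable \<mu> (\<lambda>x. f x * \<theta> x)" "integrable \<mu> (\<lambda>x. f x * \<theta>' x)"
    using Lp_imp_integrable[OF assms(1,3)] assms(4,5) unfolding weak_deriv_def
    by (auto intro: integrable_bcontfun_mult[OF assms(2)])
  moreover have "(\<integral>x. f x * \<theta> x \<partial>\<mu>) = (\<integral>x. f x * \<theta>' x \<partial>\<mu>)"
    using assms(4-6) unfolding weak_deriv_def by (metis neg_equal_iff_equal)
  ultimately show ?thesis by (simp add: right_diff_distrib)
qed

lemma weak_deriv_comp_C1b:
  fixes \<mu> :: "(real^'n) measure" and \<psi> :: "real^'m \<Rightarrow> real" and u :: "'m \<Rightarrow> real^'n \<Rightarrow> real"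
  assumes \<mu>: "finite_measure \<mu>" "sets \<mu> = sets borel" and p: "p \<ge> 1"
    and \<psi>: "\<psi> \<in> C1b" and u: "\<And>j. u j \<in> C1b"
    and wd1: "weak_deriv \<mu> p (\<lambda>_. 1) i \<theta>1" and wdu: "\<And>j. weak_deriv \<mu> p (u j) i (\<theta>u j)"
  shows "weak_deriv \<mu> p (\<lambda>x. \<psi> (\<chi> j. u j x)) i
           (\<lambda>x. (\<Sum>j\<in>UNIV. partial \<psi> j (\<chi> k. u k x) * \<theta>u j x)
              + (\<psi> (\<chi> k. u k x) - (\<Sum>j\<in>UNIV. partial \<psi> j (\<chi> k. u k x) * u j x)) * \<theta>1 x)"
proof -
  define \<Psi> where "\<Psi> x = \<psi> (\<chi> j. u j x)" for x
  define c where "c j x = partial \<psi> j (\<chi> k. u k x)" for j x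
  have w\<Psi>: "weak_deriv \<mu> p \<Psi> i (\<lambda>x. \<Psi> x * \<theta>1 x + partial \<Psi> i x)"
    unfolding \<Psi>_def by (rule weak_deriv_C1b[OF \<mu> p wd1 C1b_comp_vec_lambda[OF \<psi> u]])
  have c: "c j \<in> bcontfun" for j
    unfolding c_def
    by (rule bcontfun_compose[OF C1b_partial_bcontfun[OF \<psi>] continuous_on_vec_lambda_C1b[OF u]])
  \<comment> \<open>difference of two weak derivatives of \<open>u j\<close>, hence orthogonal to all test functions\<close>
  define h where "h j x = \<theta>u j x - (u j x * \<theta>1 x + partial (u j) i x)" for j x
  have wu: "weak_deriv \<mu> p (u j) i (\<lambda>x. u j x * \<theta>1 x + partial (u j) i x)" for j
    by (rule weak_deriv_C1b[OF \<mu> p wd1 u])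
  have h_Lp: "h j \<in> Lp \<mu> p" for j
    using wdu[of j] wu[of j] p unfolding h_def weak_deriv_def by (simp add: Lp_diff[OF \<mu>(2)])
  have h_orth: "(\<integral>x. g x * h j x \<partial>\<mu>) = 0" if "g \<in> Cc_inf" for g j
    unfolding h_def by (rule weak_deriv_diff_orthogonal[OF \<mu> p wdu wu that])
  define \<eta> where "\<eta> x = (\<Sum>j\<in>UNIV. c j x * h j x)" for x
  have "\<eta> \<in> Lp \<mu> p"
    unfolding \<eta>_def using c h_Lp p by (auto intro!: Lp_sum Lp_mult_bcontfun[OF \<mu>(2)])
  moreover have "(\<integral>x. f x * \<eta> x \<partial>\<mu>) = 0" if "f \<in> Cc_inf" for f
    unfolding \<eta>_def using c Lp_imp_integrable[OF \<mu>(1) p h_Lp] h_orth that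
    by (intro integral_Cc_inf_mult_sum_eq_0[OF \<mu>(2)]) (auto simp: bcontfun_def)
  ultimately have "weak_deriv \<mu> p \<Psi> i (\<lambda>x. (\<Psi> x * \<theta>1 x + partial \<Psi> i x) + \<eta> x)"
    by (rule weak_deriv_add_orthogonal[OF \<mu> p w\<Psi>])
  moreover have "partial \<Psi> i x = (\<Sum>j\<in>UNIV. c j x * partial (u j) i x)" for x
  proof -
    have "\<And>j x. u j differentiable (at x)" using u C1b_differentiable by blast
    with C1b_differentiable[OF \<psi>] show ?thesis
      unfolding \<Psi>_def c_def by (rule partial_comp_vec_lambda(2))
  qed
  ultimately show ?thesis
    unfolding \<Psi>_def c_def \<eta>_def h_def
    by (simp add: algebra_simps sum.distrib sum_subtractf sum_distrib_left sum_distrib_right)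
qed

theorem lemma3:
  fixes \<mu> :: "(real^'d) measure" and p :: real
  assumes "prob_space \<mu>" and "sets \<mu> = sets borel" and "p \<ge> 1"
  shows
    "(\<forall>\<phi> \<psi>. \<phi> \<in> W1p \<mu> p \<and> \<psi> \<in> C1b \<longrightarrow>
        (\<lambda>x. \<psi> x * \<phi> x) \<in> W1p \<mu> p \<and>
        (\<forall>i \<theta>. weak_deriv \<mu> p \<phi> i \<theta> \<longrightarrow>
           weak_deriv \<mu> p (\<lambda>x. \<psi> x * \<phi> x) i (\<lambda>x. \<psi> x * \<theta> x + partial \<psi> i x * \<phi> x)))
   \<and> ((\<lambda>_. 1) \<in> W1p \<mu> p \<longrightarrow>
       (\<forall>\<psi>. \<psi> \<in> C1b \<longrightarrow> \<psi> \<in> W1p \<mu> p \<and>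
          (\<forall>i \<theta>. weak_deriv \<mu> p (\<lambda>_. 1) i \<theta> \<longrightarrow>
             weak_deriv \<mu> p \<psi> i (\<lambda>x. \<psi> x * \<theta> x + partial \<psi> i x))))
   \<and> ((\<lambda>_. 1) \<in> W1p \<mu> p \<longrightarrow>
       (\<forall>(\<psi>::real^'m \<Rightarrow> real) (u::'m \<Rightarrow> real^'d \<Rightarrow> real).
          \<psi> \<in> C1b \<and> (\<forall>j. u j \<in> C1b) \<longrightarrow>
          (\<lambda>x. \<psi> (\<chi> j. u j x)) \<in> W1p \<mu> p \<and>
          (\<forall>i \<theta>1 \<theta>u. weak_deriv \<mu> p (\<lambda>_. 1) i \<theta>1 \<and> (\<forall>j. weak_deriv \<mu> p (u j) i (\<theta>u j)) \<longrightarrow>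
             weak_deriv \<mu> p (\<lambda>x. \<psi> (\<chi> j. u j x)) i
               (\<lambda>x. (\<Sum>j\<in>UNIV. partial \<psi> j (\<chi> k. u k x) * \<theta>u j x)
                    + (\<psi> (\<chi> k. u k x) - (\<Sum>j\<in>UNIV. partial \<psi> j (\<chi> k. u k x) * u j x)) * \<theta>1 x))))"
proof -
  note \<mu> = prob_space.finite_measure[OF assms(1)] assms(2) and p = assms(3)
  have W1p_C1b: "\<psi> \<in> W1p \<mu> p" if "(\<lambda>_. 1) \<in> W1p \<mu> p" "\<psi> \<in> C1b" for \<psi> :: "real^'d \<Rightarrow> real"
    using W1p_mult_C1b[OF \<mu> p that] by simp
  show ?thesis
    apply (intro conjI allI impI; (elim conjE)?)
    subgoal by (rule W1p_mult_C1b[OF \<mu> p])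
    subgoal using weak_deriv_mult_C1b[OF \<mu> p] by (simp add: W1p_def)
    subgoal by (rule W1p_C1b)
    subgoal by (rule weak_deriv_C1b[OF \<mu> p])
    subgoal by (rule W1p_C1b) (simp_all add: C1b_comp_vec_lambda)
    subgoal by (rule weak_deriv_comp_C1b[OF \<mu> p]) simp_all
    done
qed

end
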